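(* Let $G$ be a finite connected graph with a real structure and let $D_1,D_2$ be two linearly equivalent real divisors on $G$. Let $G'$ be a connected component of $G(\mathbb R)$. Then $\deg(D_1|_{G'})\equiv\deg(D_2|_{G'})\pmod 2$, where $\deg(D|_{G'})=\sum_{v\in V(G')}D(v)$.
   Context: A finite graph $G$ has vertex set $V(G)$, edge set $E(G)$ and incidence function $\psi$ assigning to each edge a set of one or two vertices (loops and multiple edges allowed). A real structure on $G$ is a pair of involutions of $V(G)$ and $E(G)$, written $v\mapsto\overline v$, $e\mapsto\overline e$, with $\psi(\overline e)=\overline{\psi(e)}$. A vertex/edge is real if fixed by the involution; a real edge $e$ is non-isolated if both ends are real vertices. $G(\mathbb R)$ is the subgraph whose vertices are the real vertices and whose edges are the non-isolated real edges. A divisor is a formal $\mathbb Z$-combination $D=\sum_vD(v)v$ of vertices; $\overline D(v)=D(\overline v)$ and $D$ is real if $\overline D=D$. For $f:V(G)\to\mathbb Z$, $\Delta(f)(v)=\sum_{e\in E(G),\,\psi(e)=\{v,w\}}(f(w)-f(v))$; $D_1\sim D_2$ iff $D_2-D_1=\Delta(f)$ for some $f$. *)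

theory Defs
  imports Main "HOL-Number_Theory.Cong"
begin

text \<open>A finite graph (loops and multiple edges allowed): vertex set V, edge set E,
  incidence function psi assigning to each edge a set of one or two vertices.\<close>
definition graph :: "'v set \<Rightarrow> 'e set \<Rightarrow> ('e \<Rightarrow> 'v set) \<Rightarrow> bool" where
  "graph V E psi \<longleftrightarrow> finite V \<and> finite E \<and>
     (\<forall>e\<in>E. psi e \<subseteq> V \<and> (card (psi e) = 1 \<or> card (psi e) = 2))"

definition adj :: "'v set \<Rightarrow> 'e set \<Rightarrow> ('e \<Rightarrow> 'v set) \<Rightarrow> ('v \<times> 'v) set" where
  "adj V E psi = {(v, w). v \<in> V \<and> w \<in> V \<and> (\<exists>e\<in>E. psi e = {v, w})}"

definition connected_graph :: "'v set \<Rightarrow> 'e set \<Rightarrow> ('e \<Rightarrow> 'v set) \<Rightarrow> bool" where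
  "connected_graph V E psi \<longleftrightarrow> graph V E psi \<and> V \<noteq> {} \<and>
     (\<forall>v\<in>V. \<forall>w\<in>V. (v, w) \<in> (adj V E psi)\<^sup>*)"

definition real_structure ::
  "'v set \<Rightarrow> 'e set \<Rightarrow> ('e \<Rightarrow> 'v set) \<Rightarrow> ('v \<Rightarrow> 'v) \<Rightarrow> ('e \<Rightarrow> 'e) \<Rightarrow> bool" where
  "real_structure V E psi sigma tau \<longleftrightarrow>
     (\<forall>v\<in>V. sigma v \<in> V \<and> sigma (sigma v) = v) \<and>
     (\<forall>e\<in>E. tau e \<in> E \<and> tau (tau e) = e) \<and>
     (\<forall>e\<in>E. psi (tau e) = sigma ` psi e)"

definition real_vertices :: "'v set \<Rightarrow> ('v \<Rightarrow> 'v) \<Rightarrow> 'v set" where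
  "real_vertices V sigma = {v\<in>V. sigma v = v}"

definition real_edges ::
  "'v set \<Rightarrow> 'e set \<Rightarrow> ('e \<Rightarrow> 'v set) \<Rightarrow> ('v \<Rightarrow> 'v) \<Rightarrow> ('e \<Rightarrow> 'e) \<Rightarrow> 'e set" where
  "real_edges V E psi sigma tau =
     {e\<in>E. tau e = e \<and> psi e \<subseteq> real_vertices V sigma}"

definition real_components ::
  "'v set \<Rightarrow> 'e set \<Rightarrow> ('e \<Rightarrow> 'v set) \<Rightarrow> ('v \<Rightarrow> 'v) \<Rightarrow> ('e \<Rightarrow> 'e) \<Rightarrow> 'v set set" where
  "real_components V E psi sigma tau =
     (let RV = real_vertices V sigma; RE = real_edges V E psi sigma tau in
      {{w\<in>RV. (v, w) \<in> (adj RV RE psi)\<^sup>*} | v. v \<in> RV})"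

text \<open>Divisors are functions 'v => int (only values on V matter).\<close>
definition real_divisor :: "'v set \<Rightarrow> ('v \<Rightarrow> 'v) \<Rightarrow> ('v \<Rightarrow> int) \<Rightarrow> bool" where
  "real_divisor V sigma D \<longleftrightarrow> (\<forall>v\<in>V. D (sigma v) = D v)"

text \<open>Laplacian: sum over edges e with psi e = {v,w} of f w - f v (loops contribute 0).\<close>
definition laplacian ::
  "'e set \<Rightarrow> ('e \<Rightarrow> 'v set) \<Rightarrow> ('v \<Rightarrow> int) \<Rightarrow> 'v \<Rightarrow> int" where
  "laplacian E psi f v = (\<Sum>e\<in>{e\<in>E. v \<in> psi e}. \<Sum>w\<in>psi e - {v}. f w - f v)"

definition lin_equiv ::
  "'v set \<Rightarrow> 'e set \<Rightarrow> ('e \<Rightarrow> 'v set) \<Rightarrow> ('v \<Rightarrow> int) \<Rightarrow> ('v \<Rightarrow> int) \<Rightarrow> bool" where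
  "lin_equiv V E psi D1 D2 \<longleftrightarrow>
     (\<exists>f :: 'v \<Rightarrow> int. \<forall>v\<in>V. D2 v - D1 v = laplacian E psi f v)"

end

theory Submission
  imports Defs
begin

text \<open>If \<open>D\<^sub>2 - D\<^sub>1 = \<Delta>f\<close> with both divisors real, then \<open>f - f \<circ> \<sigma>\<close> is harmonic, hence constant on the
  connected graph, and it is anti-invariant under \<open>\<sigma>\<close>; so \<open>f\<close> itself is real. The sum of \<open>\<Delta>f\<close> over a
  real component \<open>C\<close> splits into contributions of the single edges. A real edge meeting \<open>C\<close> lies
  inside \<open>C\<close>, so its contribution vanishes, while the contribution of any edge is unchanged by the
  involution on edges. Hence the non-real edges contribute in equal pairs and the degree difference
  on \<open>C\<close> is even.\<close>

lemma real_structureD: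
  assumes "real_structure V E psi sigma tau"
  shows real_structure_vertex: "v \<in> V \<Longrightarrow> sigma v \<in> V \<and> sigma (sigma v) = v"
    and real_structure_edge: "e \<in> E \<Longrightarrow> tau e \<in> E \<and> tau (tau e) = e"
    and real_structure_incidence: "e \<in> E \<Longrightarrow> psi (tau e) = sigma ` psi e"
  using assms unfolding real_structure_def by blast+

lemma laplacian_diff:
  "laplacian E psi (\<lambda>x. f x - g x) v = laplacian E psi f v - laplacian E psi g v"
  unfolding laplacian_def sum_subtractf[symmetric] by (intro sum.cong refl) (simp add: algebra_simps)

lemma laplacian_comp_involution:
  assumes G: "graph V E psi" and R: "real_structure V E psi sigma tau" and v: "v \<in> V"
  shows "laplacian E psi (\<lambda>x. f (sigma x)) v = laplacian E psi f (sigma v)"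
proof -
  note sV = real_structure_vertex[OF R] and tE = real_structure_edge[OF R]
    and inc = real_structure_incidence[OF R]
  have pV: "\<And>e. e \<in> E \<Longrightarrow> psi e \<subseteq> V" using G unfolding graph_def by blast
  have inj: "inj_on sigma V" by (metis inj_onI sV)
  have mem: "sigma v \<in> psi (tau e) \<longleftrightarrow> v \<in> psi e" if "e \<in> E" for e
    unfolding inc[OF that] using inj pV[OF that] v by (auto simp: inj_on_def)
  have inner: "(\<Sum>w\<in>psi e - {v}. f (sigma w) - f (sigma v))
      = (\<Sum>w\<in>psi (tau e) - {sigma v}. f w - f (sigma v))" if e: "e \<in> E" for e
  proof -
    have invol: "sigma (sigma w) = w" if "w \<in> psi e" for w
      using sV pV[OF e] that by blast
    have "sigma w \<in> psi (tau e) - {sigma v}" if "w \<in> psi e - {v}" for w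
      unfolding inc[OF e] using that inj pV[OF e] v by (auto simp: inj_on_def)
    then show ?thesis
      by (intro sum.reindex_bij_witness[of _ sigma sigma]) (use inc[OF e] invol v sV in auto)
  qed
  show ?thesis
    unfolding laplacian_def
    using tE mem inner by (intro sum.reindex_bij_witness[of _ tau tau]) (auto, metis tE mem)
qed

lemma harmonic_connected_const:
  assumes conn: "connected_graph V E psi"
    and harmonic: "\<And>v. v \<in> V \<Longrightarrow> laplacian E psi g v = 0"
    and "v \<in> V" "w \<in> V"
  shows "g v = g w"
proof -
  have G: "graph V E psi" and "V \<noteq> {}" and reach: "\<And>v w. v \<in> V \<Longrightarrow> w \<in> V \<Longrightarrow> (v, w) \<in> (adj V E psi)\<^sup>*"
    using conn unfolding connected_graph_def by auto
  have fin: "finite V" and pV: "\<And>e. e \<in> E \<Longrightarrow> psi e \<subseteq> V"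
    using G unfolding graph_def by auto
  define M where "M = Max (g ` V)"
  have le_M: "g u \<le> M" if "u \<in> V" for u
    unfolding M_def using fin that by simp
  have "M \<in> g ` V"
    unfolding M_def using fin \<open>V \<noteq> {}\<close> by (intro Max_in) auto
  then obtain v0 where "v0 \<in> V" "g v0 = M"
    by blast
  \<comment> \<open>at a maximum of \<open>g\<close> every term of \<open>-\<Delta>g\<close> is nonnegative, so harmonicity forces all to vanish\<close>
  have max_step: "g x = M" if "g u = M" and "(u, x) \<in> adj V E psi" for u x
  proof -
    obtain e where "u \<in> V" "e \<in> E" "psi e = {u, x}"
      using \<open>(u, x) \<in> adj V E psi\<close> unfolding adj_def by auto
    have nonneg: "0 \<le> g u - g y" if "e' \<in> E" "y \<in> psi e'" for e' y
      using le_M[of y] pV[OF that(1)] that(2) \<open>g u = M\<close> by auto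
    have fin_psi: "finite (psi e')" if "e' \<in> E" for e'
      using finite_subset[OF pV fin] that .
    have "(\<Sum>e'\<in>{e'\<in>E. u \<in> psi e'}. \<Sum>y\<in>psi e' - {u}. g u - g y) = - laplacian E psi g u"
      unfolding laplacian_def by (simp add: sum_negf[symmetric])
    also have "\<dots> = 0"
      using harmonic \<open>u \<in> V\<close> by simp
    finally have "(\<Sum>y\<in>psi e - {u}. g u - g y) = 0"
      using G \<open>e \<in> E\<close> \<open>psi e = {u, x}\<close> nonneg fin_psi unfolding graph_def
      by (subst (asm) sum_nonneg_eq_0_iff) (auto intro!: sum_nonneg)
    then show "g x = M"
      using \<open>psi e = {u, x}\<close> \<open>g u = M\<close> by (cases "x = u") auto
  qed
  have "g x = M" if "(v0, x) \<in> (adj V E psi)\<^sup>*" for x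
    using that by induction (use \<open>g v0 = M\<close> max_step in auto)
  then show ?thesis
    using reach \<open>v0 \<in> V\<close> assms(3,4) by metis
qed

lemma even_sum_involution:
  fixes h :: "'a \<Rightarrow> 'b::semiring_parity"
  assumes "finite A"
    and "\<And>x. x \<in> A \<Longrightarrow> tau x \<in> A" "\<And>x. x \<in> A \<Longrightarrow> tau (tau x) = x"
    and "\<And>x. x \<in> A \<Longrightarrow> h (tau x) = h x" "\<And>x. x \<in> A \<Longrightarrow> tau x = x \<Longrightarrow> h x = 0"
  shows "even (sum h A)"
  using assms
proof (induction A rule: finite_psubset_induct)
  case (psubset A)
  show ?case
  proof (cases "A = {}")
    case False
    then obtain x where "x \<in> A" by auto
    let ?orbit = "{x, tau x}"
    have "even (sum h ?orbit)"
      using psubset.prems \<open>x \<in> A\<close> by (cases "tau x = x") auto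
    moreover have "even (sum h (A - ?orbit))"
      using psubset.prems \<open>x \<in> A\<close> by (intro psubset.IH) (auto, metis+)
    moreover have "sum h A = sum h (A - ?orbit) + sum h ?orbit"
      using psubset.hyps(1) psubset.prems \<open>x \<in> A\<close> by (intro sum.subset_diff) auto
    ultimately show ?thesis by simp
  qed simp
qed

definition edge_flow :: "('v \<Rightarrow> int) \<Rightarrow> 'v set \<Rightarrow> 'v set \<Rightarrow> int" where
  "edge_flow f C S = (\<Sum>v\<in>C \<inter> S. \<Sum>w\<in>S - {v}. f w - f v)"

lemma sum_laplacian_eq_sum_edge_flow:
  assumes "finite C" "finite E"
  shows "(\<Sum>v\<in>C. laplacian E psi f v) = (\<Sum>e\<in>E. edge_flow f C (psi e))"
  unfolding laplacian_def edge_flow_def Int_def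
  using sum.swap_restrict[OF assms] by simp

lemma edge_flow_eq_0_if_subset:
  assumes "finite S" "S \<subseteq> C"
  shows "edge_flow f C S = 0"
proof -
  have "edge_flow f C S = (\<Sum>v\<in>S. \<Sum>w\<in>S. f w - f v)"
    unfolding edge_flow_def using assms by (simp add: Int_absorb1 sum_diff1)
  also have "\<dots> = (\<Sum>v\<in>S. \<Sum>w\<in>S. f w) - (\<Sum>v\<in>S. \<Sum>w\<in>S. f v)"
    by (simp add: sum_subtractf)
  also have "\<dots> = 0"
    using sum.swap[of "\<lambda>v w. f w" S S] by simp
  finally show ?thesis .
qed

lemma edge_flow_image_involution:
  assumes invol: "\<And>v. v \<in> V \<Longrightarrow> sigma v \<in> V \<and> sigma (sigma v) = v"
    and "S \<subseteq> V" and fixes_C: "\<And>v. v \<in> C \<Longrightarrow> sigma v = v"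
    and f_inv: "\<And>v. v \<in> S \<Longrightarrow> f (sigma v) = f v"
  shows "edge_flow f C (sigma ` S) = edge_flow f C S"
proof -
  have invol_S: "sigma (sigma v) = v" if "v \<in> S" for v
    using invol \<open>S \<subseteq> V\<close> that by blast
  have "C \<inter> sigma ` S = C \<inter> S"
    using invol_S fixes_C by (auto, metis, force)
  moreover have "(\<Sum>w\<in>sigma ` S - {v}. f w - f v) = (\<Sum>w\<in>S - {v}. f w - f v)" if "v \<in> C \<inter> S" for v
  proof (rule sum.reindex_bij_witness[of _ sigma sigma])
    show "sigma w \<in> sigma ` S - {v}" if "w \<in> S - {v}" for w
      using that \<open>v \<in> C \<inter> S\<close> invol_S fixes_C by (metis Diff_iff IntD1 IntD2 image_eqI singletonD singletonI)
  qed (use that invol_S fixes_C f_inv in auto)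
  ultimately show ?thesis
    unfolding edge_flow_def by simp
qed

lemma real_potential:
  assumes conn: "connected_graph V E psi" and R: "real_structure V E psi sigma tau"
    and real_laplacian: "\<And>v. v \<in> V \<Longrightarrow> laplacian E psi f (sigma v) = laplacian E psi f v"
    and "v \<in> V"
  shows "f (sigma v) = f v"
proof -
  define g where "g x = f x - f (sigma x)" for x
  have G: "graph V E psi"
    using conn unfolding connected_graph_def by simp
  have "laplacian E psi g u = 0" if "u \<in> V" for u
    using laplacian_diff[of E psi f "\<lambda>x. f (sigma x)" u] laplacian_comp_involution[OF G R that]
      real_laplacian[OF that] unfolding g_def by simp
  then have "g (sigma v) = g v"
    using harmonic_connected_const[OF conn] real_structure_vertex[OF R \<open>v \<in> V\<close>] \<open>v \<in> V\<close> by blast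
  moreover have "g (sigma v) = - g v"
    using real_structure_vertex[OF R \<open>v \<in> V\<close>] unfolding g_def by simp
  ultimately show ?thesis
    unfolding g_def by simp
qed

lemma real_component_subset:
  "C \<in> real_components V E psi sigma tau \<Longrightarrow> C \<subseteq> real_vertices V sigma"
  unfolding real_components_def Let_def by auto

lemma real_component_adj_closed:
  assumes "C \<in> real_components V E psi sigma tau" "x \<in> C"
    and "(x, y) \<in> adj (real_vertices V sigma) (real_edges V E psi sigma tau) psi"
  shows "y \<in> C"
  using assms unfolding real_components_def Let_def
  by (auto intro: rtrancl_into_rtrancl simp: adj_def)

lemma real_edge_subset_real_component:
  assumes G: "graph V E psi" and R: "real_structure V E psi sigma tau"
    and comp: "C \<in> real_components V E psi sigma tau"
    and "e \<in> E" "tau e = e" "x \<in> psi e" "x \<in> C"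
  shows "psi e \<subseteq> C"
proof
  fix y assume "y \<in> psi e"
  show "y \<in> C"
  proof (cases "y = x")
    case False
    have "psi e \<subseteq> V" "finite (psi e)" "card (psi e) \<le> 2"
      using G \<open>e \<in> E\<close> finite_subset unfolding graph_def by auto
    then have ends: "psi e = {x, y}"
      using \<open>x \<in> psi e\<close> \<open>y \<in> psi e\<close> False by (intro card_seteq[symmetric]) auto
    have x_real: "sigma x = x" "x \<in> V"
      using real_component_subset[OF comp] \<open>x \<in> C\<close> unfolding real_vertices_def by auto
    have "sigma y \<in> psi e"
      using real_structure_incidence[OF R \<open>e \<in> E\<close>] \<open>tau e = e\<close> \<open>y \<in> psi e\<close> by auto
    moreover have "sigma y \<noteq> x"
    proof
      assume "sigma y = x"
      then have "y = sigma x"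
        using real_structure_vertex[OF R] \<open>psi e \<subseteq> V\<close> \<open>y \<in> psi e\<close> by force
      then show False
        using x_real False by simp
    qed
    ultimately have "sigma y = y"
      using ends by auto
    then have "psi e \<subseteq> real_vertices V sigma"
      using ends x_real \<open>psi e \<subseteq> V\<close> unfolding real_vertices_def by auto
    then have "(x, y) \<in> adj (real_vertices V sigma) (real_edges V E psi sigma tau) psi"
      using ends \<open>e \<in> E\<close> \<open>tau e = e\<close> unfolding adj_def real_edges_def by auto
    then show ?thesis
      using real_component_adj_closed[OF comp \<open>x \<in> C\<close>] by blast
  qed (use \<open>x \<in> C\<close> in simp)
qed

lemma even_sum_edge_flow_real_component:
  assumes G: "graph V E psi" and R: "real_structure V E psi sigma tau"
    and comp: "C \<in> real_components V E psi sigma tau"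
    and f_real: "\<And>v. v \<in> V \<Longrightarrow> f (sigma v) = f v"
  shows "even (\<Sum>e\<in>E. edge_flow f C (psi e))"
proof -
  have "finite V" "finite E" and psi_V: "\<And>e. e \<in> E \<Longrightarrow> psi e \<subseteq> V"
    using G unfolding graph_def by auto
  have C_fixed: "\<And>v. v \<in> C \<Longrightarrow> sigma v = v"
    using real_component_subset[OF comp] unfolding real_vertices_def by auto
  have flow_swap: "edge_flow f C (psi (tau e)) = edge_flow f C (psi e)" if "e \<in> E" for e
    unfolding real_structure_incidence[OF R that]
    using psi_V[OF that] C_fixed f_real
    by (intro edge_flow_image_involution[OF real_structure_vertex[OF R]]) auto
  have flow_fixed: "edge_flow f C (psi e) = 0" if "e \<in> E" "tau e = e" for e
  proof (cases "psi e \<inter> C = {}")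
    case False
    then obtain x where "x \<in> psi e" "x \<in> C"
      by blast
    then have "psi e \<subseteq> C"
      by (rule real_edge_subset_real_component[OF G R comp that])
    then show ?thesis
      by (rule edge_flow_eq_0_if_subset[OF finite_subset[OF psi_V[OF that(1)] \<open>finite V\<close>]])
  qed (simp add: edge_flow_def Int_commute)
  show ?thesis
    using \<open>finite E\<close> real_structure_edge[OF R] flow_swap flow_fixed
    by (intro even_sum_involution[of E tau]) auto
qed

theorem theorem2:
  fixes V :: "'v set" and E :: "'e set" and psi :: "'e \<Rightarrow> 'v set"
    and sigma :: "'v \<Rightarrow> 'v" and tau :: "'e \<Rightarrow> 'e"
    and D1 D2 :: "'v \<Rightarrow> int" and C :: "'v set"
  assumes "connected_graph V E psi"
    and "real_structure V E psi sigma tau"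
    and "real_divisor V sigma D1" and "real_divisor V sigma D2"
    and "lin_equiv V E psi D1 D2"
    and "C \<in> real_components V E psi sigma tau"
  shows "[(\<Sum>v\<in>C. D1 v) = (\<Sum>v\<in>C. D2 v)] (mod 2)"
proof -
  have G: "graph V E psi"
    using assms(1) unfolding connected_graph_def by simp
  have "finite V" "finite E"
    using G unfolding graph_def by auto
  have "C \<subseteq> V"
    using real_component_subset[OF assms(6)] unfolding real_vertices_def by auto
  obtain f where f: "\<And>v. v \<in> V \<Longrightarrow> D2 v - D1 v = laplacian E psi f v"
    using assms(5) unfolding lin_equiv_def by blast
  have "f (sigma v) = f v" if "v \<in> V" for v
    using real_potential[OF assms(1,2) _ that] f real_structure_vertex[OF assms(2)] assms(3,4)
    unfolding real_divisor_def by metis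
  then have "even (\<Sum>e\<in>E. edge_flow f C (psi e))"
    using even_sum_edge_flow_real_component[OF G assms(2,6)] by blast
  moreover have "(\<Sum>v\<in>C. D2 v) - (\<Sum>v\<in>C. D1 v) = (\<Sum>e\<in>E. edge_flow f C (psi e))"
    using sum_laplacian_eq_sum_edge_flow[OF finite_subset[OF \<open>C \<subseteq> V\<close> \<open>finite V\<close>] \<open>finite E\<close>]
      f \<open>C \<subseteq> V\<close> by (simp add: sum_subtractf[symmetric] subset_iff)
  ultimately show ?thesis
    unfolding cong_iff_dvd_diff by (metis dvd_minus_iff minus_diff_eq)
qed

end
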